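(* Let $\mathbb{F}\in\{\mathbb{R},\mathbb{C}\}$ and $M>N$. Suppose $\Phi=\{\varphi_i\}_{i=1}^M$ is a Parseval frame for $\mathbb{F}^N$ and $\Psi=\{\psi_i\}_{i=1}^M$ is a Naimark complement of $\Phi$ (a Parseval frame for $\mathbb{F}^{M-N}$). Let $K\subseteq[M]$ with $|K|=k\leq N$ and $K^c=[M]\setminus K$. If $k\le M-N$, then for $i=1,\dots,M-N$, $$\sigma_i(\Psi_{K^c})=\begin{cases}1 & \text{if } 1\leq i\leq M-N-k,\\ \sigma_j(\Phi_K) & \text{if } i=M-N-k+j,\ 1\le j\le k.\end{cases}$$ If $k>M-N$, then $\sigma_i(\Phi_K)=1$ for $i=1,\dots,k-(M-N)$, and $\sigma_i(\Psi_{K^c})=\sigma_{i+k-(M-N)}(\Phi_K)$ for $i=1,\dots,M-N$.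
   Context: A Parseval frame for $\mathbb{F}^N$ is a family $\{\varphi_i\}_{i=1}^M\subseteq\mathbb{F}^N$ whose $N\times M$ matrix $\Phi$ (columns $\varphi_i$) satisfies $\Phi\Phi^*=I$. A Naimark complement of $\Phi$ is any $\Psi=\{\psi_i\}_{i=1}^M\subseteq\mathbb{F}^{M-N}$ with $\Psi^*\Psi=I-\Phi^*\Phi$. For $K\subseteq[M]$, $\Phi_K$ is the submatrix of columns indexed by $K$. For a matrix $F$ of size $n\times m$, $\sigma_1(F)\ge\sigma_2(F)\ge\dots\ge\sigma_{\min\{n,m\}}(F)$ denote its singular values in decreasing order. *)

theory Defs
  imports "Jordan_Normal_Form.Schur_Decomposition" "Jordan_Normal_Form.DL_Submatrix"
    "Jordan_Normal_Form.Char_Poly" "HOL-Library.Multiset"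
begin

definition col_submat :: "'a mat \<Rightarrow> nat set \<Rightarrow> 'a mat" where
  "col_submat A K = submatrix A {0..<dim_row A} K"

definition singular_values :: "complex mat \<Rightarrow> real list" where
  "singular_values F =
     take (min (dim_row F) (dim_col F))
       (rev (sorted_list_of_multiset
          (image_mset (\<lambda>z. sqrt (Re z)) (proots (char_poly (mat_adjoint F * F))))))"

(* sigma F i = i-th largest singular value, 1-based (1 \<le> i \<le> min(n,m)). *)
definition sigma :: "complex mat \<Rightarrow> nat \<Rightarrow> real" where
  "sigma F i = singular_values F ! (i - 1)"

end

theory Submission
  imports Defs "Jordan_Normal_Form.Jordan_Normal_Form_Uniqueness"
begin

(* Write B = Phi_K, B' = Phi_(K^c) and A = Psi_(K^c). The Parseval identity splits as
   B B^* + B' B'^* = I, and the Naimark relation makes A^* A the principal submatrix of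
   I - Phi^* Phi on K^c, that is A^* A = I - B'^* B'. Since X Y and Y X have the same nonzero
   eigenvalues with multiplicity, walking through B^* B, B B^*, B' B'^* = I - B B^*, B'^* B'
   and A^* A = I - B'^* B' shows that the eigenvalues of A^* A together with |K| ones are those
   of B^* B together with M - N ones and N - |K| zeros. All these eigenvalues lie in [0, 1], so
   after taking square roots and sorting, the singular values of Psi_(K^c) preceded by |K| ones
   are the singular values of Phi_K preceded by M - N ones. Both cases of the theorem are read
   off from this one list identity. *)

lemma dim_row_mat_adjoint[simp]: "dim_row (mat_adjoint A) = dim_col A"
  and dim_col_mat_adjoint[simp]: "dim_col (mat_adjoint A) = dim_row A"
  unfolding mat_adjoint_def by auto

lemma index_mat_adjoint[simp]:
  "i < dim_col A \<Longrightarrow> j < dim_row A \<Longrightarrow> mat_adjoint A $$ (i, j) = conjugate (A $$ (j, i))"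
  unfolding mat_adjoint_def by (auto simp: mat_of_rows_def)

lemma adjoint_carrier_mat[simp]: "A \<in> carrier_mat n m \<Longrightarrow> mat_adjoint A \<in> carrier_mat m n"
  unfolding carrier_mat_def by auto

lemma adjoint_mult_vec_cscalar_prod:
  fixes A :: "'a :: conjugatable_field mat"
  assumes A: "A \<in> carrier_mat n m" and w: "w \<in> carrier_vec n" and v: "v \<in> carrier_vec m"
  shows "(mat_adjoint A *\<^sub>v w) \<bullet>c v = w \<bullet>c (A *\<^sub>v v)"
proof -
  have "(mat_adjoint A *\<^sub>v w) \<bullet>c v = (\<Sum>i<m. \<Sum>l<n. conjugate (A $$ (l, i)) * w $ l * conjugate (v $ i))"
    using A w v by (auto simp: scalar_prod_def lessThan_atLeast0 sum_distrib_right intro!: sum.cong)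
  also have "\<dots> = (\<Sum>l<n. \<Sum>i<m. w $ l * conjugate (A $$ (l, i) * v $ i))"
    by (subst sum.swap) (simp add: conjugate_dist_mul ac_simps)
  also have "\<dots> = w \<bullet>c (A *\<^sub>v v)"
    using A w v by (auto simp: scalar_prod_def lessThan_atLeast0 sum_distrib_left sum_conjugate intro!: sum.cong)
  finally show ?thesis .
qed

lemma det_four_block_mat_schur_complement_right:
  fixes A :: "'a :: idom mat"
  assumes A: "A \<in> carrier_mat n m" and B: "B \<in> carrier_mat m n"
  shows "det (four_block_mat (x \<cdot>\<^sub>m 1\<^sub>m n) A B (1\<^sub>m m)) = det (x \<cdot>\<^sub>m 1\<^sub>m n - A * B)"
proof -
  let ?S = "four_block_mat (x \<cdot>\<^sub>m 1\<^sub>m n) A B (1\<^sub>m m)"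
  let ?L = "four_block_mat (1\<^sub>m n) (- A) (0\<^sub>m m n) (1\<^sub>m m)"
  have "det ?L * det ?S = det (?L * ?S)"
    using A B by (intro det_mult[symmetric, where n = "n + m"]) auto
  also have "?L * ?S = four_block_mat (x \<cdot>\<^sub>m 1\<^sub>m n - A * B) (0\<^sub>m n m) B (1\<^sub>m m)"
    using A B by (subst mult_four_block_mat[where ?nr1.0 = n and ?n1.0 = n and ?nr2.0 = m
          and ?n2.0 = m and ?nc1.0 = n and ?nc2.0 = m])
      (auto simp: minus_add_uminus_mat[of _ n n])
  also have "det \<dots> = det (x \<cdot>\<^sub>m 1\<^sub>m n - A * B)"
    using A B by (subst det_four_block_mat_upper_right_zero[where n = n and m = m]) auto
  also have "det ?L = 1"
    using A by (subst det_four_block_mat_lower_left_zero[where n = n and m = m]) auto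
  finally show ?thesis by simp
qed

lemma det_four_block_mat_schur_complement_left:
  fixes A :: "'a :: idom mat"
  assumes A: "A \<in> carrier_mat n m" and B: "B \<in> carrier_mat m n"
  shows "x ^ m * det (four_block_mat (x \<cdot>\<^sub>m 1\<^sub>m n) A B (1\<^sub>m m))
    = x ^ n * det (x \<cdot>\<^sub>m 1\<^sub>m m - B * A)"
proof -
  let ?S = "four_block_mat (x \<cdot>\<^sub>m 1\<^sub>m n) A B (1\<^sub>m m)"
  let ?L = "four_block_mat (1\<^sub>m n) (0\<^sub>m n m) (- B) (x \<cdot>\<^sub>m 1\<^sub>m m)"
  have "- B * (x \<cdot>\<^sub>m 1\<^sub>m n) + x \<cdot>\<^sub>m 1\<^sub>m m * B = 0\<^sub>m m n"
    using B by (auto simp: mult_smult_distrib[OF B] mult_smult_assoc_mat[of _ m m])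
  then have LS: "?L * ?S = four_block_mat (x \<cdot>\<^sub>m 1\<^sub>m n) A (0\<^sub>m m n) (x \<cdot>\<^sub>m 1\<^sub>m m - B * A)"
    using A B by (subst mult_four_block_mat[where ?nr1.0 = n and ?n1.0 = n and ?nr2.0 = m
          and ?n2.0 = m and ?nc1.0 = n and ?nc2.0 = m])
      (auto simp: minus_add_uminus_mat[of _ m m] comm_add_mat[of _ m m])
  have "det ?L * det ?S = det (?L * ?S)"
    using A B by (intro det_mult[symmetric, where n = "n + m"]) auto
  also have "\<dots> = x ^ n * det (x \<cdot>\<^sub>m 1\<^sub>m m - B * A)"
    unfolding LS using A B by (subst det_four_block_mat_lower_left_zero[where n = n and m = m]) auto
  also have "det ?L = x ^ m"
    using B by (subst det_four_block_mat_upper_right_zero[where n = n and m = m]) auto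
  finally show ?thesis .
qed

lemma det_smult_one_minus_mult_commute:
  fixes A :: "'a :: idom mat"
  assumes A: "A \<in> carrier_mat n m" and B: "B \<in> carrier_mat m n"
  shows "x ^ m * det (x \<cdot>\<^sub>m 1\<^sub>m n - A * B) = x ^ n * det (x \<cdot>\<^sub>m 1\<^sub>m m - B * A)"
  using det_four_block_mat_schur_complement_right[OF A B, of x]
    det_four_block_mat_schur_complement_left[OF A B, of x] by simp

lemma char_poly_eq_det:
  assumes "A \<in> carrier_mat n n"
  shows "char_poly A = det ([:0, 1:] \<cdot>\<^sub>m 1\<^sub>m n - map_mat (\<lambda>a. [:a:]) A)"
proof -
  have "[:0, 1:] \<cdot>\<^sub>m 1\<^sub>m n + map_mat (\<lambda>a. [:- a:]) A = [:0, 1:] \<cdot>\<^sub>m 1\<^sub>m n - map_mat (\<lambda>a. [:a:]) A"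
    using assms by (intro eq_matI) auto
  then show ?thesis
    using assms unfolding char_poly_defs by simp
qed

lemma char_poly_mult_commute:
  fixes A :: "'a :: idom mat"
  assumes A: "A \<in> carrier_mat n m" and B: "B \<in> carrier_mat m n"
  shows "[:0, 1:] ^ m * char_poly (A * B) = [:0, 1:] ^ n * char_poly (B * A)"
  using det_smult_one_minus_mult_commute[of "map_mat (\<lambda>a. [:a:]) A" n m "map_mat (\<lambda>a. [:a:]) B" "[:0, 1:]"]
  by (simp add: A B char_poly_eq_det[OF mult_carrier_mat[OF A B]] char_poly_eq_det[OF mult_carrier_mat[OF B A]]
      map_poly_mult[OF A B] map_poly_mult[OF B A])

definition eigvals :: "'a :: idom mat \<Rightarrow> 'a multiset" where
  "eigvals A = proots (char_poly A)"

lemma char_poly_nonzero: "A \<in> carrier_mat n n \<Longrightarrow> char_poly A \<noteq> 0"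
  using degree_monic_char_poly[of A n] by auto

lemma eigvals_mult_commute:
  fixes A :: "'a :: idom mat"
  assumes A: "A \<in> carrier_mat n m" and B: "B \<in> carrier_mat m n"
  shows "replicate_mset m 0 + eigvals (A * B) = replicate_mset n 0 + eigvals (B * A)"
proof -
  have "proots ([:0, 1:] ^ k :: 'a poly) = replicate_mset k 0" for k
    using proots_power[of "[:0, 1:]" k] proots_linear_factor[of "0 :: 'a"] by simp
  then show ?thesis
    using arg_cong[OF char_poly_mult_commute[OF A B], of proots] A B
    by (simp add: eigvals_def proots_mult char_poly_nonzero[of _ n] char_poly_nonzero[of _ m])
qed

lemma mem_eigvals_iff_eigenvalue:
  fixes A :: "'a :: field mat"
  assumes "A \<in> carrier_mat n n"
  shows "z \<in># eigvals A \<longleftrightarrow> eigenvalue A z"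
  using assms by (simp add: eigvals_def char_poly_nonzero eigenvalue_root_char_poly)

lemma proots_prod_linear_factors: "proots (\<Prod>e\<leftarrow>es. [:- e, 1:]) = mset (es :: 'a :: idom list)"
proof -
  have "proots (\<Prod>p\<leftarrow>map (\<lambda>e. [:- e, 1:]) es. p) = (\<Sum>p\<leftarrow>map (\<lambda>e. [:- e, 1:]) es. proots p)"
    by (rule proots_prod_list) auto
  also have "\<dots> = mset es"
    by (induction es) auto
  finally show ?thesis
    by simp
qed

lemma size_eigvals:
  fixes A :: "complex mat"
  assumes "A \<in> carrier_mat n n"
  shows "size (eigvals A) = n"
  using char_poly_factorized[OF assms] by (auto simp: eigvals_def proots_prod_linear_factors)

lemma eigvals_one_minus:
  fixes A :: "complex mat"
  assumes A: "A \<in> carrier_mat n n"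
  shows "eigvals (1\<^sub>m n - A) = image_mset (\<lambda>z. 1 - z) (eigvals A)"
proof -
  obtain es where cA: "char_poly A = (\<Prod>e\<leftarrow>es. [:- e, 1:])"
    using char_poly_factorized[OF A] by auto
  obtain T P Q where "schur_decomposition A es = (T, P, Q)"
    by (cases "schur_decomposition A es")
  then have sim: "similar_mat_wit A T P Q" and T: "upper_triangular T" "diag_mat T = es"
    using schur_decomposition[OF A cA] by auto
  then have T_carrier: "T \<in> carrier_mat n n"
    using similar_mat_witD2[OF A] by auto
  have one_minus: "1\<^sub>m n - X = (- 1) \<cdot>\<^sub>m char_matrix X 1" if "X \<in> carrier_mat n n" for X :: "complex mat"
    using that by (intro eq_matI) (auto simp: char_matrix_def)
  have "similar_mat (1\<^sub>m n - A) (1\<^sub>m n - T)"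
    unfolding one_minus[OF A] one_minus[OF T_carrier] similar_mat_def
    by (blast intro: similar_mat_wit_smult similar_mat_wit_char_matrix sim)
  then have "char_poly (1\<^sub>m n - A) = char_poly (1\<^sub>m n - T)"
    by (rule char_poly_similar)
  also have "\<dots> = (\<Prod>e\<leftarrow>diag_mat (1\<^sub>m n - T). [:- e, 1:])"
    using T T_carrier
    by (intro char_poly_upper_triangular[OF minus_carrier_mat[OF T_carrier]]) (auto simp: upper_triangular_def)
  also have "diag_mat (1\<^sub>m n - T) = map (\<lambda>z. 1 - z) es"
    using T T_carrier by (auto simp: diag_mat_def)
  finally show ?thesis
    by (simp only: eigvals_def cA proots_prod_linear_factors mset_map)
qed

lemma eigvals_gram_nonneg:
  fixes A :: "complex mat"
  assumes A: "A \<in> carrier_mat n m" and z: "z \<in># eigvals (mat_adjoint A * A)"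
  shows "0 \<le> z"
proof -
  have G: "mat_adjoint A * A \<in> carrier_mat m m"
    using A by auto
  then obtain v where v: "v \<in> carrier_vec m" "v \<noteq> 0\<^sub>v m"
    and eigen: "mat_adjoint A * A *\<^sub>v v = z \<cdot>\<^sub>v v"
    using z unfolding mem_eigvals_iff_eigenvalue[OF G] eigenvalue_def eigenvector_def by auto
  have "z * (v \<bullet>c v) = (mat_adjoint A * A *\<^sub>v v) \<bullet>c v"
    using v by (simp add: eigen)
  also have "\<dots> = (A *\<^sub>v v) \<bullet>c (A *\<^sub>v v)"
    using A v by (simp add: assoc_mult_mat_vec[of _ m n] adjoint_mult_vec_cscalar_prod)
  finally have "z * (v \<bullet>c v) \<ge> 0"
    by (metis conjugate_square_ge_0_vec)
  moreover have "v \<bullet>c v > 0"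
    using v by simp
  ultimately show ?thesis
    by (auto simp: less_eq_complex_def less_complex_def zero_le_mult_iff)
qed

lemma eigvals_complementary_grams:
  fixes X Y :: "complex mat"
  assumes X: "X \<in> carrier_mat N m" and Y: "Y \<in> carrier_mat N m'"
    and one: "X * mat_adjoint X + Y * mat_adjoint Y = 1\<^sub>m N"
  shows "replicate_mset m' 1 + replicate_mset N 0 + eigvals (mat_adjoint X * X)
    = replicate_mset N 1 + replicate_mset m 0 + eigvals (1\<^sub>m m' - mat_adjoint Y * Y)"
proof -
  let ?f = "image_mset (\<lambda>z. 1 - z)"
  have XX: "X * mat_adjoint X \<in> carrier_mat N N" and YY: "Y * mat_adjoint Y \<in> carrier_mat N N"
    using X Y by auto
  have "Y * mat_adjoint Y = 1\<^sub>m N - X * mat_adjoint X"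
  proof (rule eq_matI)
    fix i j assume "i < dim_row (1\<^sub>m N - X * mat_adjoint X)" "j < dim_col (1\<^sub>m N - X * mat_adjoint X)"
    then have "i < N" "j < N"
      using X by auto
    then show "(Y * mat_adjoint Y) $$ (i, j) = (1\<^sub>m N - X * mat_adjoint X) $$ (i, j)"
      using arg_cong[OF one, of "\<lambda>C. C $$ (i, j)"] carrier_matD[OF XX] carrier_matD[OF YY]
      by (simp add: algebra_simps del: index_mult_mat)
  qed (use X Y in auto)
  then have "replicate_mset m' 1 + eigvals (X * mat_adjoint X)
      = ?f (replicate_mset m' 0 + eigvals (Y * mat_adjoint Y))"
    by (simp add: eigvals_one_minus[OF XX] multiset.map_comp o_def)
  also have "\<dots> = ?f (replicate_mset N 0 + eigvals (mat_adjoint Y * Y))"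
    using Y by (subst eigvals_mult_commute[where n = N and m = m']) auto
  also have "\<dots> = replicate_mset N 1 + eigvals (1\<^sub>m m' - mat_adjoint Y * Y)"
    using Y by (subst eigvals_one_minus[where n = m']) auto
  finally have "replicate_mset m' 1 + eigvals (X * mat_adjoint X)
      = replicate_mset N 1 + eigvals (1\<^sub>m m' - mat_adjoint Y * Y)" .
  moreover have "replicate_mset m 0 + eigvals (X * mat_adjoint X)
      = replicate_mset N 0 + eigvals (mat_adjoint X * X)"
    using X by (intro eigvals_mult_commute) auto
  ultimately show ?thesis
    by (metis add.assoc add.commute)
qed

lemma eigvals_complementary_gram_le_1:
  fixes X Y :: "complex mat"
  assumes X: "X \<in> carrier_mat N m" and Y: "Y \<in> carrier_mat N m'"
    and one: "X * mat_adjoint X + Y * mat_adjoint Y = 1\<^sub>m N"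
    and z: "z \<in># eigvals (mat_adjoint X * X)"
  shows "Re z \<le> 1"
proof -
  have "z \<in># replicate_mset N 1 + replicate_mset m 0 + eigvals (1\<^sub>m m' - mat_adjoint Y * Y)"
    unfolding eigvals_complementary_grams[OF assms(1-3), symmetric] using z by simp
  moreover have "eigvals (1\<^sub>m m' - mat_adjoint Y * Y) = image_mset (\<lambda>w. 1 - w) (eigvals (mat_adjoint Y * Y))"
    using Y by (intro eigvals_one_minus) auto
  ultimately consider "z = 1" | "z = 0" | w where "w \<in># eigvals (mat_adjoint Y * Y)" "z = 1 - w"
    by (auto split: if_splits)
  then show ?thesis
    using eigvals_gram_nonneg[OF Y] by cases (auto simp: less_eq_complex_def)
qed

lemma bij_betw_pick:
  assumes S: "finite S"
  shows "bij_betw (pick S) {..<card S} S"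
proof -
  have "inj_on (pick S) {..<card S}"
    by (intro strict_mono_on_imp_inj_on) (auto simp: strict_mono_on_def pick_mono)
  moreover have "pick S ` {..<card S} \<subseteq> S"
    by (auto intro: pick_in_set)
  ultimately show ?thesis
    using S by (simp add: bij_betw_def card_subset_eq card_image)
qed

lemma pick_atLeastLessThan: "i < r \<Longrightarrow> pick {0..<r} i = i"
  using pick_reduce_set[of i r UNIV] by (simp add: pick_UNIV atLeast0LessThan lessThan_def)

lemma submatrix_carrier:
  assumes "A \<in> carrier_mat n m" "I \<subseteq> {0..<n}" "J \<subseteq> {0..<m}"
  shows "submatrix A I J \<in> carrier_mat (card I) (card J)"
proof -
  have rows: "{i. i < dim_row A \<and> i \<in> I} = I" and cols: "{j. j < dim_col A \<and> j \<in> J} = J"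
    using assms by auto
  show ?thesis
    by (rule carrier_matI) (simp_all only: dim_submatrix rows cols)
qed

lemma index_submatrix:
  assumes "A \<in> carrier_mat n m" "I \<subseteq> {0..<n}" "J \<subseteq> {0..<m}" "i < card I" "j < card J"
  shows "submatrix A I J $$ (i, j) = A $$ (pick I i, pick J j)"
proof -
  have rows: "{i. i < dim_row A \<and> i \<in> I} = I" and cols: "{j. j < dim_col A \<and> j \<in> J} = J"
    using assms by auto
  show ?thesis
    using assms(4,5) by (intro submatrix_index) (simp_all only: rows cols)
qed

lemma col_submat_carrier:
  "A \<in> carrier_mat r M \<Longrightarrow> K \<subseteq> {0..<M} \<Longrightarrow> col_submat A K \<in> carrier_mat r (card K)"
  using submatrix_carrier[of A r M "{0..<r}" K] by (simp add: col_submat_def)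

lemma index_col_submat:
  assumes "A \<in> carrier_mat r M" "K \<subseteq> {0..<M}" "i < r" "j < card K"
  shows "col_submat A K $$ (i, j) = A $$ (i, pick K j)"
  using assms index_submatrix[of A r M "{0..<r}" K i j] by (simp add: col_submat_def pick_atLeastLessThan)

lemma adjoint_col_submat_mult:
  assumes X: "X \<in> carrier_mat r M" and Y: "Y \<in> carrier_mat r M" and K: "K \<subseteq> {0..<M}"
  shows "mat_adjoint (col_submat X K) * col_submat Y K = submatrix (mat_adjoint X * Y) K K"
proof -
  have G: "mat_adjoint X * Y \<in> carrier_mat M M"
    using X Y by auto
  note S = submatrix_carrier[OF G K K]
  show ?thesis
  proof (rule eq_matI)
    fix i j assume "i < dim_row (submatrix (mat_adjoint X * Y) K K)"
      "j < dim_col (submatrix (mat_adjoint X * Y) K K)"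
    then have ij: "i < card K" "j < card K"
      using S by auto
    then have pick: "pick K i < M" "pick K j < M"
      using K pick_in_set[of i K] pick_in_set[of j K] by auto
    have "(mat_adjoint (col_submat X K) * col_submat Y K) $$ (i, j)
        = (\<Sum>l<r. conjugate (X $$ (l, pick K i)) * Y $$ (l, pick K j))"
      using ij col_submat_carrier[OF X K] col_submat_carrier[OF Y K]
      by (auto simp: scalar_prod_def lessThan_atLeast0 index_col_submat[OF X K] index_col_submat[OF Y K]
          intro!: sum.cong)
    also have "\<dots> = (mat_adjoint X * Y) $$ (pick K i, pick K j)"
      using X Y pick by (simp add: scalar_prod_def lessThan_atLeast0)
    also have "\<dots> = submatrix (mat_adjoint X * Y) K K $$ (i, j)"
      by (rule index_submatrix[OF G K K ij, symmetric])
    finally show "(mat_adjoint (col_submat X K) * col_submat Y K) $$ (i, j)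
        = submatrix (mat_adjoint X * Y) K K $$ (i, j)" .
  qed (use S col_submat_carrier[OF X K] col_submat_carrier[OF Y K] in auto)
qed

lemma submatrix_one_minus:
  assumes C: "C \<in> carrier_mat M M" and K: "K \<subseteq> {0..<M}"
  shows "submatrix (1\<^sub>m M - C) K K = 1\<^sub>m (card K) - submatrix C K K"
proof (rule eq_matI)
  fix i j assume "i < dim_row (1\<^sub>m (card K) - submatrix C K K)" "j < dim_col (1\<^sub>m (card K) - submatrix C K K)"
  then have ij: "i < card K" "j < card K"
    using submatrix_carrier[OF C K K] by auto
  moreover have "pick K i = pick K j \<longleftrightarrow> i = j"
    using ij bij_betw_pick[of K] finite_subset[OF K] by (auto simp: bij_betw_def inj_on_def)
  moreover have "pick K i < M" "pick K j < M"
    using ij K pick_in_set[of i K] pick_in_set[of j K] by auto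
  ultimately show "submatrix (1\<^sub>m M - C) K K $$ (i, j) = (1\<^sub>m (card K) - submatrix C K K) $$ (i, j)"
    using C submatrix_carrier[OF C K K]
    by (simp add: index_submatrix[OF C K K] index_submatrix[OF minus_carrier_mat[OF C] K K])
qed (use submatrix_carrier[OF C K K] submatrix_carrier[OF minus_carrier_mat[OF C] K K] in auto)

lemma col_submat_gram_split:
  assumes X: "X \<in> carrier_mat r M" and K: "K \<subseteq> {0..<M}"
  shows "col_submat X K * mat_adjoint (col_submat X K)
      + col_submat X ({0..<M} - K) * mat_adjoint (col_submat X ({0..<M} - K)) = X * mat_adjoint X"
proof -
  have gram: "(col_submat X S * mat_adjoint (col_submat X S)) $$ (i, j)
      = (\<Sum>l\<in>S. X $$ (i, l) * conjugate (X $$ (j, l)))"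
    if S: "S \<subseteq> {0..<M}" and ij: "i < r" "j < r" for S i j
  proof -
    have "(col_submat X S * mat_adjoint (col_submat X S)) $$ (i, j)
        = (\<Sum>l<card S. X $$ (i, pick S l) * conjugate (X $$ (j, pick S l)))"
      using col_submat_carrier[OF X S] X S ij
      by (auto simp: scalar_prod_def lessThan_atLeast0 index_col_submat intro!: sum.cong)
    also have "\<dots> = (\<Sum>l\<in>S. X $$ (i, l) * conjugate (X $$ (j, l)))"
      using sum.reindex_bij_betw[OF bij_betw_pick[OF finite_subset[OF S finite_atLeastLessThan]]] .
    finally show ?thesis .
  qed
  show ?thesis
  proof (rule eq_matI)
    fix i j assume "i < dim_row (X * mat_adjoint X)" "j < dim_col (X * mat_adjoint X)"
    then have ij: "i < r" "j < r"
      using X by auto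
    have "(\<Sum>l\<in>K. X $$ (i, l) * conjugate (X $$ (j, l)))
        + (\<Sum>l\<in>{0..<M} - K. X $$ (i, l) * conjugate (X $$ (j, l)))
        = (\<Sum>l\<in>{0..<M}. X $$ (i, l) * conjugate (X $$ (j, l)))"
      by (simp add: sum.subset_diff[OF K finite_atLeastLessThan])
    also have "\<dots> = (X * mat_adjoint X) $$ (i, j)"
      using X ij by (auto simp: scalar_prod_def intro!: sum.cong)
    finally have "(\<Sum>l\<in>K. X $$ (i, l) * conjugate (X $$ (j, l)))
        + (\<Sum>l\<in>{0..<M} - K. X $$ (i, l) * conjugate (X $$ (j, l)))
        = (X * mat_adjoint X) $$ (i, j)" .
    then show "(col_submat X K * mat_adjoint (col_submat X K)
        + col_submat X ({0..<M} - K) * mat_adjoint (col_submat X ({0..<M} - K))) $$ (i, j)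
        = (X * mat_adjoint X) $$ (i, j)"
      using gram[OF K ij] gram[of "{0..<M} - K", OF _ ij] ij
        col_submat_carrier[OF X K] col_submat_carrier[OF X, of "{0..<M} - K"] by simp
  qed (use X col_submat_carrier[OF X K] col_submat_carrier[OF X, of "{0..<M} - K"] in auto)
qed

lemma replicate_mset_add: "replicate_mset (m + n) x = replicate_mset m x + replicate_mset n x"
  by (induction m) auto

lemma sorted_list_of_multiset_replicate_mset:
  "sorted_list_of_multiset (replicate_mset n x) = replicate n x"
  using sorted_list_of_multiset_mset[of "replicate n x"] by simp

lemma rev_sorted_list_of_multiset_union:
  fixes X Y :: "'a :: linorder multiset"
  assumes "\<forall>x\<in>#X. \<forall>y\<in>#Y. y \<le> x"
  shows "rev (sorted_list_of_multiset (X + Y))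
    = rev (sorted_list_of_multiset X) @ rev (sorted_list_of_multiset Y)"
proof -
  let ?xs = "sorted_list_of_multiset Y @ sorted_list_of_multiset X"
  have "sorted ?xs"
    using assms by (auto simp: sorted_append)
  then have "sorted_list_of_multiset (mset ?xs) = ?xs"
    by (simp only: sorted_list_of_multiset_mset sorted_sort_id)
  then show ?thesis
    by (simp add: add.commute)
qed

lemma eigvals_naimark_complement_col_submat:
  fixes Phi Psi :: "complex mat"
  assumes Phi: "Phi \<in> carrier_mat N M" and Psi: "Psi \<in> carrier_mat n M" and NM: "N \<le> M"
    and parseval: "Phi * mat_adjoint Phi = 1\<^sub>m N"
    and naimark: "mat_adjoint Psi * Psi = 1\<^sub>m M - mat_adjoint Phi * Phi"
    and K: "K \<subseteq> {0..<M}" and kN: "card K \<le> N"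
  defines "A \<equiv> col_submat Psi ({0..<M} - K)" and "B \<equiv> col_submat Phi K"
  shows "replicate_mset (card K) 1 + eigvals (mat_adjoint A * A)
    = replicate_mset (M - N) 1 + replicate_mset (N - card K) 0 + eigvals (mat_adjoint B * B)"
proof -
  define Kc where "Kc = {0..<M} - K"
  define B' where "B' = col_submat Phi Kc"
  have Kc: "Kc \<subseteq> {0..<M}" and card_Kc: "card Kc = M - card K"
    using K by (auto simp: Kc_def card_Diff_subset finite_subset)
  have B: "B \<in> carrier_mat N (card K)" and B': "B' \<in> carrier_mat N (M - card K)"
    unfolding B_def B'_def using col_submat_carrier[OF Phi K] col_submat_carrier[OF Phi Kc] card_Kc
    by auto
  have one: "B * mat_adjoint B + B' * mat_adjoint B' = 1\<^sub>m N"
    unfolding B_def B'_def Kc_def col_submat_gram_split[OF Phi K] parseval ..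
  have "mat_adjoint A * A = submatrix (1\<^sub>m M - mat_adjoint Phi * Phi) Kc Kc"
    unfolding A_def Kc_def[symmetric] adjoint_col_submat_mult[OF Psi Psi Kc] naimark ..
  also have "\<dots> = 1\<^sub>m (M - card K) - mat_adjoint B' * B'"
    using submatrix_one_minus[OF mult_carrier_mat[OF adjoint_carrier_mat[OF Phi] Phi] Kc]
    by (simp add: card_Kc B'_def adjoint_col_submat_mult[OF Phi Phi Kc])
  finally have "replicate_mset (M - card K) 1 + replicate_mset N 0 + eigvals (mat_adjoint B * B)
      = replicate_mset N 1 + replicate_mset (card K) 0 + eigvals (mat_adjoint A * A)"
    using eigvals_complementary_grams[OF B B' one] by simp
  moreover have "M - card K = (M - N) + (N - card K)" and N: "N = card K + (N - card K)"
    using NM kN by auto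
  ultimately have "replicate_mset ((M - N) + (N - card K)) 1
      + replicate_mset (card K + (N - card K)) 0 + eigvals (mat_adjoint B * B)
      = replicate_mset (card K + (N - card K)) 1 + replicate_mset (card K) 0 + eigvals (mat_adjoint A * A)"
    by (metis N)
  then show ?thesis
    unfolding replicate_mset_add by (simp add: ac_simps)
qed

lemma rev_sorted_list_of_multiset_padded:
  fixes a b :: "real multiset"
  assumes ab: "replicate_mset k 1 + a = replicate_mset d 1 + replicate_mset z 0 + b"
    and b: "\<forall>x\<in>#b. 0 \<le> x \<and> x \<le> 1"
  shows "replicate k 1 @ rev (sorted_list_of_multiset a)
    = replicate d 1 @ rev (sorted_list_of_multiset b) @ replicate z 0"
proof -
  have a: "x \<le> 1" if x: "x \<in># a" for x
    using b x arg_cong[OF ab, of "\<lambda>X. x \<in># X"] by (auto split: if_splits)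
  have "replicate k 1 @ rev (sorted_list_of_multiset a)
      = rev (sorted_list_of_multiset (replicate_mset k 1 + a))"
    using a by (simp add: rev_sorted_list_of_multiset_union sorted_list_of_multiset_replicate_mset)
  also have "\<dots> = rev (sorted_list_of_multiset (replicate_mset d 1 + b + replicate_mset z 0))"
    unfolding ab by (simp add: ac_simps)
  also have "\<dots> = replicate d 1 @ rev (sorted_list_of_multiset b) @ replicate z 0"
    using b by (simp add: rev_sorted_list_of_multiset_union sorted_list_of_multiset_replicate_mset)
  finally show ?thesis .
qed

lemma eigvals_parseval_col_submat_bounds:
  fixes Phi :: "complex mat"
  assumes Phi: "Phi \<in> carrier_mat N M" and parseval: "Phi * mat_adjoint Phi = 1\<^sub>m N"
    and K: "K \<subseteq> {0..<M}"
    and z: "z \<in># eigvals (mat_adjoint (col_submat Phi K) * col_submat Phi K)"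
  shows "0 \<le> Re z \<and> Re z \<le> 1"
proof -
  have B: "col_submat Phi K \<in> carrier_mat N (card K)"
    and B': "col_submat Phi ({0..<M} - K) \<in> carrier_mat N (card ({0..<M} - K))"
    using col_submat_carrier[OF Phi] K by auto
  show ?thesis
    using eigvals_gram_nonneg[OF B z] col_submat_gram_split[OF Phi K] parseval
      eigvals_complementary_gram_le_1[OF B B' _ z]
    by (auto simp: less_eq_complex_def)
qed

lemma singular_values_eigvals:
  "singular_values F = take (min (dim_row F) (dim_col F))
    (rev (sorted_list_of_multiset (image_mset (\<lambda>z. sqrt (Re z)) (eigvals (mat_adjoint F * F)))))"
  unfolding singular_values_def eigvals_def ..

lemma singular_values_naimark_complement_col_submat:
  fixes Phi Psi :: "complex mat"
  assumes Phi: "Phi \<in> carrier_mat N M" and Psi: "Psi \<in> carrier_mat (M - N) M" and NM: "N \<le> M"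
    and parseval: "Phi * mat_adjoint Phi = 1\<^sub>m N"
    and naimark: "mat_adjoint Psi * Psi = 1\<^sub>m M - mat_adjoint Phi * Phi"
    and K: "K \<subseteq> {0..<M}" and kN: "card K \<le> N"
  shows "replicate (card K) 1 @ singular_values (col_submat Psi ({0..<M} - K))
    = replicate (M - N) 1 @ singular_values (col_submat Phi K)"
proof -
  define A where "A = col_submat Psi ({0..<M} - K)"
  define B where "B = col_submat Phi K"
  let ?desc = "\<lambda>F. rev (sorted_list_of_multiset (image_mset (\<lambda>z. sqrt (Re z)) (eigvals (mat_adjoint F * F))))"
  have A: "A \<in> carrier_mat (M - N) (M - card K)" and B: "B \<in> carrier_mat N (card K)"
    unfolding A_def B_def using col_submat_carrier[OF Psi, of "{0..<M} - K"] col_submat_carrier[OF Phi K] K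
    by (auto simp: card_Diff_subset finite_subset)
  have lists: "replicate (card K) 1 @ ?desc A = replicate (M - N) 1 @ ?desc B @ replicate (N - card K) 0"
    using eigvals_parseval_col_submat_bounds[OF Phi parseval K]
      arg_cong[OF eigvals_naimark_complement_col_submat[OF Phi Psi NM parseval naimark K kN],
        of "image_mset (\<lambda>z. sqrt (Re z))"]
    by (intro rev_sorted_list_of_multiset_padded) (auto simp: A_def B_def)
  have "length (?desc B) = card K"
    using size_eigvals[OF mult_carrier_mat[OF adjoint_carrier_mat[OF B] B]]
      size_mset[of "sorted_list_of_multiset (image_mset (\<lambda>z. sqrt (Re z)) (eigvals (mat_adjoint B * B)))"]
    by simp
  moreover have "singular_values A = take (M - N) (?desc A)" "singular_values B = take (card K) (?desc B)"
    using A B kN by (simp_all add: singular_values_eigvals min_absorb1)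
  ultimately show ?thesis
    using arg_cong[OF lists, of "take (card K + (M - N))"] by (simp add: A_def B_def)
qed

theorem proposition13:
  fixes Phi Psi :: "complex mat" and N M k :: nat and K :: "nat set" and F :: "complex set"
  assumes field: "F = \<real> \<or> F = UNIV"
    and entries_Phi: "\<forall>i<N. \<forall>j<M. Phi $$ (i, j) \<in> F"
    and entries_Psi: "\<forall>i<M - N. \<forall>j<M. Psi $$ (i, j) \<in> F"
    and MN: "M > N"
    and Phi_dim: "Phi \<in> carrier_mat N M"
    and Psi_dim: "Psi \<in> carrier_mat (M - N) M"
    and parseval: "Phi * mat_adjoint Phi = 1\<^sub>m N"
    and naimark: "mat_adjoint Psi * Psi = 1\<^sub>m M - mat_adjoint Phi * Phi"
    and K: "K \<subseteq> {0..<M}" and cardK: "card K = k" and kN: "k \<le> N"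
  shows "(k \<le> M - N \<longrightarrow>
            (\<forall>i\<in>{1..M - N - k}. sigma (col_submat Psi ({0..<M} - K)) i = 1) \<and>
            (\<forall>j\<in>{1..k}. sigma (col_submat Psi ({0..<M} - K)) (M - N - k + j)
                            = sigma (col_submat Phi K) j))
       \<and> (k > M - N \<longrightarrow>
            (\<forall>i\<in>{1..k - (M - N)}. sigma (col_submat Phi K) i = 1) \<and>
            (\<forall>i\<in>{1..M - N}. sigma (col_submat Psi ({0..<M} - K)) i
                            = sigma (col_submat Phi K) (i + k - (M - N))))"
proof -
  define d where "d = M - N"
  define A where "A = col_submat Psi ({0..<M} - K)"
  define B where "B = col_submat Phi K"
  define S where "S = replicate d 1 @ singular_values B"
  have padded: "replicate k 1 @ singular_values A = S"
    using singular_values_naimark_complement_col_submat[OF Phi_dim Psi_dim _ parseval naimark K] MN kN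
    by (simp add: A_def B_def S_def d_def cardK)
  have sigma_A: "sigma A i = S ! (k + i - 1)" if "1 \<le> i" for i
    using that by (simp add: sigma_def padded[symmetric] nth_append)
  have sigma_B: "sigma B j = S ! (d + j - 1)" if "1 \<le> j" for j
    using that by (simp add: sigma_def S_def nth_append)
  have ones_d: "S ! t = 1" if "t < d" for t
    using that by (simp add: S_def nth_append)
  have ones_k: "S ! t = 1" if "t < k" for t
    using that by (simp add: padded[symmetric] nth_append)
  show ?thesis
    unfolding d_def[symmetric] A_def[symmetric] B_def[symmetric]
    by (auto simp: sigma_A sigma_B ones_d ones_k intro!: arg_cong[where f = "(!) S"])
qed

end
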